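(* Let $A$ be a finite set, $n\ge3$, and let $\rho\subseteq A^n$ be a strongly rich relation preserved by a WNU vector-function. Then there exist an abelian group structure $(A;+)$ on $A$ and bijections $\phi_1,\dots,\phi_n:A\to A$ such that $$\rho=\{(x_1,\dots,x_n)\in A^n:\ \phi_1(x_1)+\phi_2(x_2)+\dots+\phi_n(x_n)=0\}.$$
   Context: $\rho\subseteq A^n$ is strongly rich if for every tuple $(a_1,\dots,a_n)\in A^n$ and every $j\in\{1,\dots,n\}$ there is a unique $b\in A$ with $(a_1,\dots,a_{j-1},b,a_{j+1},\dots,a_n)\in\rho$. A WNU is an $m$-ary ($m\ge2$) operation $f$ on $A$ with $f(x,\dots,x)=x$ and $f(y,x,\dots,x)=f(x,y,x,\dots,x)=\dots=f(x,\dots,x,y)$. A WNU vector-function of arity $m$ is a tuple $(f_1,\dots,f_n)$ of $m$-ary WNUs on $A$; it preserves $\rho$ if for all $\alpha^1,\dots,\alpha^m\in\rho$ the tuple $(f_1(\alpha^1(1),\dots,\alpha^m(1)),\dots,f_n(\alpha^1(n),\dots,\alpha^m(n)))$ lies in $\rho$ (a single WNU $f$ preserving $\rho$ is the case $f_1=\dots=f_n=f$). *)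

theory Defs
  imports "HOL-Algebra.FiniteProduct"
begin

text \<open>The finite set A is the universe of a finite type 'a. An n-ary relation is a set of
lists of length n; coordinates are indexed 0..n-1.\<close>

definition n_ary_rel :: "nat \<Rightarrow> 'a list set \<Rightarrow> bool" where
  "n_ary_rel n \<rho> \<longleftrightarrow> (\<forall>xs\<in>\<rho>. length xs = n)"

definition strongly_rich :: "nat \<Rightarrow> 'a list set \<Rightarrow> bool" where
  "strongly_rich n \<rho> \<longleftrightarrow>
     (\<forall>xs. length xs = n \<longrightarrow> (\<forall>j<n. \<exists>!b. xs[j := b] \<in> \<rho>))"

text \<open>An m-ary operation is a function on lists, used on lists of length m.\<close>
definition WNU :: "nat \<Rightarrow> ('a list \<Rightarrow> 'a) \<Rightarrow> bool" where
  "WNU m f \<longleftrightarrow> m \<ge> 2 \<and>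
     (\<forall>x. f (replicate m x) = x) \<and>
     (\<forall>x y. \<forall>i<m. \<forall>j<m. f ((replicate m x)[i := y]) = f ((replicate m x)[j := y]))"

definition WNU_vector_function :: "nat \<Rightarrow> nat \<Rightarrow> (nat \<Rightarrow> 'a list \<Rightarrow> 'a) \<Rightarrow> bool" where
  "WNU_vector_function n m fs \<longleftrightarrow> (\<forall>i<n. WNU m (fs i))"

definition preserves_vec :: "nat \<Rightarrow> nat \<Rightarrow> (nat \<Rightarrow> 'a list \<Rightarrow> 'a) \<Rightarrow> 'a list set \<Rightarrow> bool" where
  "preserves_vec n m fs \<rho> \<longleftrightarrow>
     (\<forall>\<alpha>s. length \<alpha>s = m \<and> set \<alpha>s \<subseteq> \<rho> \<longrightarrow>
        map (\<lambda>i. fs i (map (\<lambda>\<alpha>. \<alpha> ! i) \<alpha>s)) [0..<n] \<in> \<rho>)"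

end

theory Submission
  imports Defs
begin

text \<open>
  Fix a tuple base in the relation and relabel the first N = n - 1 coordinates by the
  bijections x \<mapsto> (the last entry of base[i := x] completed into the relation). Then the
  relation becomes the graph of an N-ary operation G with neutral element c = base ! N
  that is bijective in each argument, and the last WNU W of the vector-function commutes
  with G. For a + b = G (a, b, c, ..., c), W is additive, and single x = W (x, c, ..., c) is
  injective because adding it over the m positions gives W (x, ..., x) = x; on a finite set
  it is therefore onto. Weak near-unanimity gives W (a, b, c, ...) = single a + single b =
  single b + single a, whence + is commutative and similarly associative, and G is the
  N-fold sum. Relabelling the last coordinate by negation yields the equation.
\<close>

lemma (in group) inv_mult_eq_one_iff:
  assumes "a \<in> carrier G" "b \<in> carrier G"
  shows "inv a \<otimes> b = \<one> \<longleftrightarrow> a = b"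
proof
  assume "inv a \<otimes> b = \<one>"
  then have "inv b = inv a"
    using assms by (intro inv_equality) simp_all
  then show "a = b"
    using assms inv_inv by metis
qed (use assms in simp)

locale wnu_loop =
  fixes N m :: nat and c :: "'a::finite" and G W :: "(nat \<Rightarrow> 'a) \<Rightarrow> 'a"
  assumes two_le_N: "2 \<le> N" and two_le_m: "2 \<le> m"
    and G_cong: "(\<And>i. i < N \<Longrightarrow> y i = y' i) \<Longrightarrow> G y = G y'"
    and W_cong: "(\<And>k. k < m \<Longrightarrow> x k = x' k) \<Longrightarrow> W x = W x'"
    and G_W_commute: "G (\<lambda>i. W (\<lambda>k. Y k i)) = W (\<lambda>k. G (Y k))"
    and G_unit: "j < N \<Longrightarrow> G ((\<lambda>_. c)(j := v)) = v"
    and G_bij: "j < N \<Longrightarrow> bij (\<lambda>a. G (y(j := a)))"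
    and W_idem: "W (\<lambda>_. a) = a"
    and W_weak_nu: "i < m \<Longrightarrow> j < m \<Longrightarrow> W ((\<lambda>_. a)(i := b)) = W ((\<lambda>_. a)(j := b))"
begin

definition add :: "'a \<Rightarrow> 'a \<Rightarrow> 'a" where
  "add a b = G ((\<lambda>_. c)(0 := a, 1 := b))"

definition single :: "'a \<Rightarrow> 'a" where
  "single x = W ((\<lambda>_. c)(0 := x))"

lemma G_const: "G (\<lambda>_. c) = c"
  using G_unit[of 0 c] two_le_N by (simp add: fun_upd_idem)

lemma add_c_left [simp]: "add c b = b"
  using G_unit[of 1 b] two_le_N by (simp add: add_def fun_upd_idem)

lemma add_c_right [simp]: "add a c = a"
  using G_unit[of 0 a] two_le_N by (simp add: add_def fun_upd_idem)

lemma single_c [simp]: "single c = c"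
  by (simp add: single_def fun_upd_idem W_idem)

lemma W_single: "j < m \<Longrightarrow> W ((\<lambda>_. c)(j := x)) = single x"
  unfolding single_def using W_weak_nu[of j 0] two_le_m by simp

lemma W_add: "W (\<lambda>k. add (a k) (b k)) = add (W a) (W b)"
proof -
  have "(\<lambda>i. W (\<lambda>k. ((\<lambda>_. c)(0 := a k, 1 := b k)) i)) = (\<lambda>_. c)(0 := W a, 1 := W b)"
  proof
    fix i show "W (\<lambda>k. ((\<lambda>_. c)(0 := a k, 1 := b k)) i) = ((\<lambda>_. c)(0 := W a, 1 := W b)) i"
      by (cases "i = 0"; cases "i = 1") (simp_all add: W_idem)
  qed
  then have "add (W a) (W b) = G (\<lambda>i. W (\<lambda>k. ((\<lambda>_. c)(0 := a k, 1 := b k)) i))"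
    unfolding add_def by (rule arg_cong[where f = G, OF sym])
  also have "\<dots> = W (\<lambda>k. add (a k) (b k))"
    unfolding add_def by (rule G_W_commute)
  finally show ?thesis ..
qed

lemma single_G: "single (G y) = G (\<lambda>i. single (y i))"
proof -
  have "(\<lambda>k. G (((\<lambda>_ _. c)(0 := y)) k)) = (\<lambda>_. c)(0 := G y)"
    by (auto simp: fun_eq_iff G_const)
  then have "single (G y) = W (\<lambda>k. G (((\<lambda>_ _. c)(0 := y)) k))"
    unfolding single_def by (rule arg_cong[where f = W, OF sym])
  also have "\<dots> = G (\<lambda>i. W (\<lambda>k. ((\<lambda>_ _. c)(0 := y)) k i))"
    by (rule G_W_commute[symmetric])
  also have "(\<lambda>i. W (\<lambda>k. ((\<lambda>_ _. c)(0 := y)) k i)) = (\<lambda>i. single (y i))"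
    by (auto simp: fun_eq_iff single_def intro!: arg_cong[where f = W])
  finally show ?thesis .
qed

lemma single_add: "single (add a b) = add (single a) (single b)"
  unfolding add_def single_G by (rule arg_cong[where f = G]) auto

lemma W_pair: "W ((\<lambda>_. c)(0 := a, 1 := b)) = add (single a) (single b)"
proof -
  have "(\<lambda>k::nat. add (((\<lambda>_. c)(0 := a)) k) (((\<lambda>_. c)(1 := b)) k)) = (\<lambda>_. c)(0 := a, 1 := b)"
    by (auto simp: fun_eq_iff)
  then show ?thesis
    using W_add[of "(\<lambda>_. c)(0 := a)" "(\<lambda>_. c)(1 := b)"] W_single[of 1 b] two_le_m
    by (simp add: single_def)
qed

lemma W_pair_swap: "W ((\<lambda>_. c)(0 := a, 1 := b)) = add (single b) (single a)"
proof -
  have "(\<lambda>k::nat. add (((\<lambda>_. c)(1 := b)) k) (((\<lambda>_. c)(0 := a)) k)) = (\<lambda>_. c)(0 := a, 1 := b)"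
    by (auto simp: fun_eq_iff)
  then show ?thesis
    using W_add[of "(\<lambda>_. c)(1 := b)" "(\<lambda>_. c)(0 := a)"] W_single[of 1 b] two_le_m
    by (simp add: single_def)
qed

lemma single_eq_c: assumes "single x = c" shows "x = c"
proof -
  \<comment> \<open>W is additive, so W of the first k entries of (x, ..., x) is k copies of single x = c.\<close>
  define g where "g k = W (\<lambda>l. if l < k then x else c)" for k
  have g_Suc: "g (Suc k) = g k" if "k < m" for k
  proof -
    have "(\<lambda>l::nat. add (if l < k then x else c) (((\<lambda>_. c)(k := x)) l)) = (\<lambda>l. if l < Suc k then x else c)"
      by auto
    then have "g (Suc k) = add (g k) (W ((\<lambda>_. c)(k := x)))"
      using W_add[of "\<lambda>l. if l < k then x else c" "(\<lambda>_. c)(k := x)"] by (simp add: g_def)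
    then show ?thesis
      using W_single[OF that] assms by simp
  qed
  have "k \<le> m \<Longrightarrow> g k = c" for k
    by (induction k) (auto simp: g_def W_idem g_Suc[unfolded g_def])
  moreover have "g m = x"
    unfolding g_def using W_cong[of "\<lambda>l. if l < m then x else c" "\<lambda>_. x"] W_idem by simp
  ultimately show ?thesis by simp
qed

lemma add_eq_G_update: "add a b = G (((\<lambda>_. c)(1 := b))(0 := a))"
proof -
  have "(\<lambda>_::nat. c)(0 := a, 1 := b) = ((\<lambda>_. c)(1 := b))(0 := a)"
    by (auto simp: fun_eq_iff)
  then show ?thesis
    unfolding add_def by (rule arg_cong)
qed

lemma add_right_cancel: assumes "add a b = add a' b" shows "a = a'"
proof -
  have "inj (\<lambda>z. G (((\<lambda>_. c)(1 := b))(0 := z)))"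
    by (rule bij_is_inj, rule G_bij) (use two_le_N in simp)
  moreover have "G (((\<lambda>_. c)(1 := b))(0 := a)) = G (((\<lambda>_. c)(1 := b))(0 := a'))"
    using assms unfolding add_eq_G_update .
  ultimately show ?thesis
    by (rule injD)
qed

lemma add_left_solvable: "\<exists>d. add d b = a"
proof -
  have "surj (\<lambda>z. G (((\<lambda>_. c)(1 := b))(0 := z)))"
    by (rule bij_is_surj, rule G_bij) (use two_le_N in simp)
  then obtain d where "a = G (((\<lambda>_. c)(1 := b))(0 := d))"
    by (rule surjE)
  then have "add d b = a"
    unfolding add_eq_G_update ..
  then show ?thesis ..
qed

lemma inj_single: "inj single"
proof
  fix x y assume xy: "single x = single y"
  obtain d where d: "add d y = x"
    using add_left_solvable by blast
  have "add (single d) (single y) = single (add d y)"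
    by (rule single_add[symmetric])
  also have "\<dots> = add c (single y)"
    using d xy by simp
  finally have "single d = c"
    by (rule add_right_cancel)
  then have "d = c"
    by (rule single_eq_c)
  with d show "x = y" by simp
qed

lemma surj_single: "surj single"
  using finite_UNIV_inj_surj[OF finite_UNIV inj_single] .

text \<open>Weak near-unanimity splits W (a, b, c, ..., c) in two orders.\<close>

lemma add_commute: "add x y = add y x"
proof -
  obtain a b where "x = single a" "y = single b"
    using surj_single by (metis surjD)
  then show ?thesis
    using W_pair[of a b] W_pair_swap[of a b] by simp
qed

lemma add_assoc: "add (add x y) z = add x (add y z)"
proof -
  obtain a b d where abd: "x = single a" "y = single b" "z = single d"
    using surj_single by (metis surjD)
  have "(\<lambda>k::nat. add (((\<lambda>_. c)(0 := a)) k) (((\<lambda>_. c)(0 := b, 1 := d)) k)) = (\<lambda>_. c)(0 := add a b, 1 := d)"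
    by (auto simp: fun_eq_iff)
  then have "W ((\<lambda>_. c)(0 := add a b, 1 := d)) = add x (add y z)"
    using W_add[of "(\<lambda>_. c)(0 := a)" "(\<lambda>_. c)(0 := b, 1 := d)"] W_pair[of b d] abd
    by (simp add: single_def)
  moreover have "W ((\<lambda>_. c)(0 := add a b, 1 := d)) = add (add x y) z"
    using W_pair[of "add a b" d] abd by (simp add: single_add)
  ultimately show ?thesis by simp
qed

definition add_group :: "'a monoid" where
  "add_group = \<lparr>carrier = UNIV, mult = add, one = c\<rparr>"

lemma carrier_add_group [simp]: "carrier add_group = UNIV"
  and mult_add_group: "x \<otimes>\<^bsub>add_group\<^esub> y = add x y"
  and one_add_group: "\<one>\<^bsub>add_group\<^esub> = c"
  by (simp_all add: add_group_def)

lemma comm_group_add_group: "comm_group add_group"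
proof (rule comm_groupI)
  fix x show "\<exists>y\<in>carrier add_group. y \<otimes>\<^bsub>add_group\<^esub> x = \<one>\<^bsub>add_group\<^esub>"
    using add_left_solvable[of x c] by (simp add: mult_add_group one_add_group)
qed (simp_all add: mult_add_group one_add_group add_assoc, rule add_commute)

lemma G_split: assumes "j < N" shows "G y = add (G (y(j := c))) (y j)"
proof -
  define Y where "Y = (\<lambda>_::nat. \<lambda>_::nat. c)(0 := y(j := c), 1 := (\<lambda>_. c)(j := y j))"
  have "(\<lambda>i. W (\<lambda>k. Y k i)) = (\<lambda>i. single (y i))"
  proof
    fix i show "W (\<lambda>k. Y k i) = single (y i)"
    proof (cases "i = j")
      case True
      then have "(\<lambda>k. Y k i) = (\<lambda>_. c)(1 := y j)"
        by (auto simp: Y_def)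
      then show ?thesis using W_single[of 1] two_le_m True by simp
    next
      case False
      then have "(\<lambda>k. Y k i) = (\<lambda>_. c)(0 := y i)"
        by (auto simp: Y_def)
      then show ?thesis by (simp add: single_def)
    qed
  qed
  moreover have "(\<lambda>k. G (Y k)) = (\<lambda>_. c)(0 := G (y(j := c)), 1 := y j)"
    by (auto simp: Y_def G_unit[OF assms] G_const)
  ultimately have "single (G y) = W ((\<lambda>_. c)(0 := G (y(j := c)), 1 := y j))"
    using single_G[of y] G_W_commute[of Y] by simp
  also have "\<dots> = single (add (G (y(j := c))) (y j))"
    by (simp only: W_pair single_add)
  finally show ?thesis
    using inj_single by (simp add: inj_eq)
qed

lemma G_eq_finprod: "G y = finprod add_group y {..<N}"
proof -
  interpret comm_group add_group by (rule comm_group_add_group)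
  have "k \<le> N \<Longrightarrow> G (\<lambda>i. if i < k then y i else c) = finprod add_group y {..<k}" for k
  proof (induction k)
    case 0 then show ?case by (simp add: G_const one_add_group)
  next
    case (Suc k)
    have "(\<lambda>i. if i < Suc k then y i else c)(k := c) = (\<lambda>i. if i < k then y i else c)"
      by (auto simp: fun_eq_iff)
    then have "G (\<lambda>i. if i < Suc k then y i else c) = add (finprod add_group y {..<k}) (y k)"
      using G_split[of k "\<lambda>i. if i < Suc k then y i else c"] Suc by simp
    then show ?case
      by (simp add: lessThan_Suc add_commute mult_add_group)
  qed
  from this[of N] show ?thesis
    using G_cong[of "\<lambda>i. if i < N then y i else c" y] by simp
qed

lemma bij_inv_add_group: "bij (\<lambda>x. inv\<^bsub>add_group\<^esub> x)"
proof -
  interpret comm_group add_group by (rule comm_group_add_group)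
  show ?thesis
    by (rule o_bij[where g = "\<lambda>x. inv\<^bsub>add_group\<^esub> x"]) (simp_all add: fun_eq_iff)
qed

lemma finprod_inv_last_eq_one_iff:
  "finprod add_group (\<lambda>i. if i < N then y i else inv\<^bsub>add_group\<^esub> (z i)) {..<Suc N} = \<one>\<^bsub>add_group\<^esub>
     \<longleftrightarrow> z N = G y"
proof -
  interpret comm_group add_group by (rule comm_group_add_group)
  have "finprod add_group (\<lambda>i. if i < N then y i else inv\<^bsub>add_group\<^esub> (z i)) {..<N}
      = finprod add_group y {..<N}"
    by (intro finprod_cong') auto
  also have "\<dots> = G y"
    by (rule G_eq_finprod[symmetric])
  finally have "finprod add_group (\<lambda>i. if i < N then y i else inv\<^bsub>add_group\<^esub> (z i)) {..<N} = G y" .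
  then have "finprod add_group (\<lambda>i. if i < N then y i else inv\<^bsub>add_group\<^esub> (z i)) {..<Suc N}
      = inv\<^bsub>add_group\<^esub> (z N) \<otimes>\<^bsub>add_group\<^esub> G y"
    by (simp add: lessThan_Suc)
  then show ?thesis
    by (simp add: inv_mult_eq_one_iff)
qed

end

locale strongly_rich_wnu =
  fixes N m :: nat and \<rho> :: "'a::finite list set" and fs :: "nat \<Rightarrow> 'a list \<Rightarrow> 'a"
  assumes arity: "n_ary_rel (Suc N) \<rho>"
    and rich: "strongly_rich (Suc N) \<rho>"
    and wnu: "WNU_vector_function (Suc N) m fs"
    and preserves: "preserves_vec (Suc N) m fs \<rho>"
begin

lemma length_mem: "xs \<in> \<rho> \<Longrightarrow> length xs = Suc N"
  using arity unfolding n_ary_rel_def by blast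

lemma ex1_update: "length xs = Suc N \<Longrightarrow> j < Suc N \<Longrightarrow> \<exists>!b. xs[j := b] \<in> \<rho>"
  using rich unfolding strongly_rich_def by blast

lemma fs_idem: "i < Suc N \<Longrightarrow> fs i (replicate m x) = x"
  using wnu unfolding WNU_vector_function_def WNU_def by blast

lemma fs_weak_nu:
  "i < Suc N \<Longrightarrow> a < m \<Longrightarrow> b < m \<Longrightarrow> fs i ((replicate m x)[a := y]) = fs i ((replicate m x)[b := y])"
  using wnu unfolding WNU_vector_function_def WNU_def by blast

lemma two_le_m: "2 \<le> m"
  using wnu unfolding WNU_vector_function_def WNU_def by blast

definition apply_vec :: "'a list list \<Rightarrow> 'a list" where
  "apply_vec \<alpha>s = map (\<lambda>i. fs i (map (\<lambda>\<alpha>. \<alpha> ! i) \<alpha>s)) [0..<Suc N]"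

lemma length_apply_vec [simp]: "length (apply_vec \<alpha>s) = Suc N"
  by (simp add: apply_vec_def)

lemma nth_apply_vec: "i < Suc N \<Longrightarrow> apply_vec \<alpha>s ! i = fs i (map (\<lambda>\<alpha>. \<alpha> ! i) \<alpha>s)"
  by (simp add: apply_vec_def del: upt_Suc)

lemma apply_vec_mem: "length \<alpha>s = m \<Longrightarrow> set \<alpha>s \<subseteq> \<rho> \<Longrightarrow> apply_vec \<alpha>s \<in> \<rho>"
  using preserves unfolding preserves_vec_def apply_vec_def by blast

definition base :: "'a list" where
  "base = (SOME e. e \<in> \<rho>)"

lemma base_mem: "base \<in> \<rho>"
proof -
  have "\<exists>e. e \<in> \<rho>"
    using ex1_update[of "replicate (Suc N) undefined" 0] by auto
  then show ?thesis
    unfolding base_def by (rule someI_ex)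
qed

lemma length_base [simp]: "length base = Suc N"
  using base_mem by (rule length_mem)

definition to_last :: "nat \<Rightarrow> 'a \<Rightarrow> 'a" where
  "to_last i x = (THE b. base[i := x, N := b] \<in> \<rho>)"

lemma to_last_mem: "i < N \<Longrightarrow> base[i := x, N := to_last i x] \<in> \<rho>"
  unfolding to_last_def by (rule theI') (rule ex1_update; simp)

lemma to_last_eq: "i < N \<Longrightarrow> base[i := x, N := b] \<in> \<rho> \<Longrightarrow> to_last i x = b"
  unfolding to_last_def by (rule the1_equality) (rule ex1_update; simp)

lemma inj_to_last: assumes i: "i < N" shows "inj (to_last i)"
proof
  fix x y assume xy: "to_last i x = to_last i y"
  have swap: "base[i := z, N := b] = base[N := b, i := z]" for z b
    using i by (simp add: list_update_swap)
  have "base[N := to_last i x, i := x] \<in> \<rho>" "base[N := to_last i x, i := y] \<in> \<rho>"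
    using to_last_mem[OF i, of x] to_last_mem[OF i, of y] xy by (simp_all add: swap)
  moreover have "\<exists>!z. base[N := to_last i x, i := z] \<in> \<rho>"
    using i by (intro ex1_update) simp_all
  ultimately show "x = y" by blast
qed

lemma bij_to_last: "i < N \<Longrightarrow> bij (to_last i)"
  by (simp add: bij_def inj_to_last finite_UNIV_inj_surj)

definition from_last :: "nat \<Rightarrow> 'a \<Rightarrow> 'a" where
  "from_last i = inv_into UNIV (to_last i)"

lemma to_last_from_last [simp]: "i < N \<Longrightarrow> to_last i (from_last i y) = y"
  unfolding from_last_def using bij_to_last by (simp add: bij_is_surj surj_f_inv_f)

lemma from_last_to_last [simp]: "i < N \<Longrightarrow> from_last i (to_last i x) = x"
  unfolding from_last_def using inj_to_last by simp

lemma from_last_base: assumes "i < N" shows "from_last i (base ! N) = base ! i"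
proof -
  have "to_last i (base ! i) = base ! N"
    using assms by (intro to_last_eq) (simp_all add: base_mem)
  then show ?thesis
    using assms from_last_to_last by metis
qed

lemma to_last_fs:
  assumes i: "i < N" and xs: "length xs = m"
  shows "to_last i (fs i xs) = fs N (map (to_last i) xs)"
proof (rule to_last_eq[OF i])
  \<comment> \<open>Off coordinates i and N these tuples agree with base, and fs j is idempotent there.\<close>
  let ?\<alpha>s = "map (\<lambda>x. base[i := x, N := to_last i x]) xs"
  have "apply_vec ?\<alpha>s = base[i := fs i xs, N := fs N (map (to_last i) xs)]"
  proof (rule nth_equalityI)
    fix j assume "j < length (apply_vec ?\<alpha>s)"
    then have j: "j < Suc N" by simp
    consider "j = N" | "j = i" | "j \<noteq> N" "j \<noteq> i" by blast
    then show "apply_vec ?\<alpha>s ! j = base[i := fs i xs, N := fs N (map (to_last i) xs)] ! j"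
    proof cases
      case 3
      then have "map (\<lambda>\<alpha>. \<alpha> ! j) ?\<alpha>s = replicate m (base ! j)"
        using xs by (simp add: comp_def map_replicate_const)
      with 3 j show ?thesis by (simp add: nth_apply_vec fs_idem)
    qed (use i j in \<open>simp_all add: nth_apply_vec comp_def\<close>)
  qed simp
  then show "base[i := fs i xs, N := fs N (map (to_last i) xs)] \<in> \<rho>"
    using apply_vec_mem[of ?\<alpha>s] xs to_last_mem[OF i] by auto
qed

lemma fs_from_last:
  assumes i: "i < N" and ys: "length ys = m"
  shows "fs i (map (from_last i) ys) = from_last i (fs N ys)"
proof -
  have "to_last i (fs i (map (from_last i) ys)) = fs N ys"
    using to_last_fs[OF i, of "map (from_last i) ys"] ys i by (simp add: comp_def)
  then show ?thesis
    using i from_last_to_last by metis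
qed

definition tuple :: "(nat \<Rightarrow> 'a) \<Rightarrow> 'a \<Rightarrow> 'a list" where
  "tuple y b = map (\<lambda>i. if i < N then from_last i (y i) else b) [0..<Suc N]"

lemma length_tuple [simp]: "length (tuple y b) = Suc N"
  by (simp add: tuple_def)

lemma nth_tuple: "i < Suc N \<Longrightarrow> tuple y b ! i = (if i = N then b else from_last i (y i))"
  by (simp add: tuple_def del: upt_Suc)

lemma tuple_update_last: "(tuple y b)[N := b'] = tuple y b'"
  by (rule nth_equalityI) (auto simp: nth_list_update nth_tuple)

lemma tuple_update: "j < N \<Longrightarrow> (tuple y b)[j := from_last j a] = tuple (y(j := a)) b"
  by (rule nth_equalityI) (auto simp: nth_list_update nth_tuple)

definition last_entry :: "(nat \<Rightarrow> 'a) \<Rightarrow> 'a" where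
  "last_entry y = (THE b. tuple y b \<in> \<rho>)"

lemma ex1_tuple_mem: "\<exists>!b. tuple y b \<in> \<rho>"
  using ex1_update[of "tuple y undefined" N] by (simp add: tuple_update_last)

lemma tuple_last_entry_mem: "tuple y (last_entry y) \<in> \<rho>"
  unfolding last_entry_def by (rule theI'[OF ex1_tuple_mem])

lemma last_entry_eq: "tuple y b \<in> \<rho> \<Longrightarrow> last_entry y = b"
  unfolding last_entry_def by (rule the1_equality[OF ex1_tuple_mem])

lemma last_entry_cong: "(\<And>i. i < N \<Longrightarrow> y i = y' i) \<Longrightarrow> last_entry y = last_entry y'"
proof -
  assume "\<And>i. i < N \<Longrightarrow> y i = y' i"
  then have "tuple y = tuple y'"
    unfolding tuple_def by (intro ext map_cong) auto
  then show ?thesis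
    by (simp add: last_entry_def)
qed

definition wnu_last :: "(nat \<Rightarrow> 'a) \<Rightarrow> 'a" where
  "wnu_last x = fs N (map x [0..<m])"

lemma wnu_last_cong: "(\<And>k. k < m \<Longrightarrow> x k = x' k) \<Longrightarrow> wnu_last x = wnu_last x'"
  unfolding wnu_last_def by (intro arg_cong[where f = "fs N"] map_cong) auto

lemma wnu_last_idem: "wnu_last (\<lambda>_. a) = a"
  unfolding wnu_last_def using fs_idem[of N] by (simp add: map_replicate_const)

lemma wnu_last_weak_nu:
  assumes "i < m" "j < m" shows "wnu_last ((\<lambda>_. a)(i := b)) = wnu_last ((\<lambda>_. a)(j := b))"
proof -
  have "map ((\<lambda>_. a)(k := b)) [0..<m] = (replicate m a)[k := b]" for k
    by (rule nth_equalityI) (auto simp: nth_list_update)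
  then show ?thesis
    unfolding wnu_last_def by (simp only:) (rule fs_weak_nu; use assms in simp)
qed

lemma last_entry_wnu_last:
  "last_entry (\<lambda>i. wnu_last (\<lambda>k. Y k i)) = wnu_last (\<lambda>k. last_entry (Y k))"
proof (rule last_entry_eq)
  let ?\<alpha>s = "map (\<lambda>k. tuple (Y k) (last_entry (Y k))) [0..<m]"
  have "apply_vec ?\<alpha>s = tuple (\<lambda>i. wnu_last (\<lambda>k. Y k i)) (wnu_last (\<lambda>k. last_entry (Y k)))"
  proof (rule nth_equalityI)
    fix j assume "j < length (apply_vec ?\<alpha>s)"
    then have j: "j < Suc N" by simp
    show "apply_vec ?\<alpha>s ! j = tuple (\<lambda>i. wnu_last (\<lambda>k. Y k i)) (wnu_last (\<lambda>k. last_entry (Y k))) ! j"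
    proof (cases "j = N")
      case True
      then show ?thesis by (simp add: nth_apply_vec nth_tuple wnu_last_def comp_def)
    next
      case False
      with j have "j < N" by simp
      then show ?thesis
        using fs_from_last[of j "map (\<lambda>k. Y k j) [0..<m]"] j
        by (simp add: nth_apply_vec nth_tuple wnu_last_def comp_def)
    qed
  qed simp
  then show "tuple (\<lambda>i. wnu_last (\<lambda>k. Y k i)) (wnu_last (\<lambda>k. last_entry (Y k))) \<in> \<rho>"
    using apply_vec_mem[of ?\<alpha>s] tuple_last_entry_mem by auto
qed

lemma last_entry_unit: assumes j: "j < N" shows "last_entry ((\<lambda>_. base ! N)(j := v)) = v"
proof (rule last_entry_eq)
  have "tuple ((\<lambda>_. base ! N)(j := v)) v = base[j := from_last j v, N := to_last j (from_last j v)]"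
    by (rule nth_equalityI) (use j in \<open>auto simp: nth_tuple nth_list_update from_last_base\<close>)
  then show "tuple ((\<lambda>_. base ! N)(j := v)) v \<in> \<rho>"
    using to_last_mem[OF j] by simp
qed

lemma bij_last_entry_update: assumes j: "j < N" shows "bij (\<lambda>a. last_entry (y(j := a)))"
proof (rule bijI)
  show "inj (\<lambda>a. last_entry (y(j := a)))"
  proof
    fix a a' assume eq: "last_entry (y(j := a)) = last_entry (y(j := a'))"
    let ?t = "tuple y (last_entry (y(j := a)))"
    have "?t[j := from_last j a] \<in> \<rho>" "?t[j := from_last j a'] \<in> \<rho>"
      using tuple_last_entry_mem[of "y(j := a)"] tuple_last_entry_mem[of "y(j := a')"] eq
      by (simp_all add: tuple_update[OF j])
    moreover have "\<exists>!z. ?t[j := z] \<in> \<rho>"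
      using j by (intro ex1_update) simp_all
    ultimately have "from_last j a = from_last j a'" by blast
    then show "a = a'"
      using j to_last_from_last by metis
  qed
  have "\<exists>a. last_entry (y(j := a)) = u" for u
  proof -
    obtain z where "(tuple y u)[j := z] \<in> \<rho>"
      using ex1_update[of "tuple y u" j] j by auto
    then have "tuple (y(j := to_last j z)) u \<in> \<rho>"
      using j tuple_update[OF j, of y u "to_last j z"] by simp
    then show ?thesis
      using last_entry_eq by blast
  qed
  then show "surj (\<lambda>a. last_entry (y(j := a)))"
    by (metis surj_def)
qed

lemma wnu_loop_last_entry: "2 \<le> N \<Longrightarrow> wnu_loop N m (base ! N) last_entry wnu_last"
  by unfold_locales
    (auto simp: two_le_m last_entry_wnu_last last_entry_unit bij_last_entry_update wnu_last_idem
      intro: last_entry_cong wnu_last_cong wnu_last_weak_nu)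

lemma mem_iff_last_entry: "xs \<in> \<rho> \<longleftrightarrow> length xs = Suc N \<and> xs ! N = last_entry (\<lambda>i. to_last i (xs ! i))"
proof -
  have tuple_eq: "tuple (\<lambda>i. to_last i (xs ! i)) b = xs[N := b]" if "length xs = Suc N" for b
    by (rule nth_equalityI) (use that in \<open>auto simp: nth_tuple nth_list_update\<close>)
  show ?thesis
  proof
    assume xs: "xs \<in> \<rho>"
    then have "length xs = Suc N" by (rule length_mem)
    moreover from this xs have "tuple (\<lambda>i. to_last i (xs ! i)) (xs ! N) \<in> \<rho>"
      by (simp add: tuple_eq)
    ultimately show "length xs = Suc N \<and> xs ! N = last_entry (\<lambda>i. to_last i (xs ! i))"
      using last_entry_eq by metis
  next
    assume xs: "length xs = Suc N \<and> xs ! N = last_entry (\<lambda>i. to_last i (xs ! i))"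
    then have "tuple (\<lambda>i. to_last i (xs ! i)) (xs ! N) = xs[N := xs ! N]"
      by (intro tuple_eq) simp
    also have "\<dots> = xs" by simp
    finally have "tuple (\<lambda>i. to_last i (xs ! i)) (xs ! N) = xs" .
    moreover have "tuple (\<lambda>i. to_last i (xs ! i)) (xs ! N) \<in> \<rho>"
      using xs tuple_last_entry_mem by simp
    ultimately show "xs \<in> \<rho>" by simp
  qed
qed

end

theorem mainTheorem12:
  fixes n :: nat and \<rho> :: "('a::finite) list set"
  assumes "n \<ge> 3"
    and "n_ary_rel n \<rho>"
    and "strongly_rich n \<rho>"
    and "\<exists>m fs. WNU_vector_function n m fs \<and> preserves_vec n m fs \<rho>"
  shows "\<exists>(G :: 'a monoid) \<phi>. comm_group G \<and> carrier G = UNIV \<and>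
           (\<forall>i<n. bij (\<phi> i :: 'a \<Rightarrow> 'a)) \<and>
           \<rho> = {xs. length xs = n \<and> finprod G (\<lambda>i. \<phi> i (xs ! i)) {..<n} = \<one>\<^bsub>G\<^esub>}"
proof -
  obtain m fs where fs: "WNU_vector_function n m fs" "preserves_vec n m fs \<rho>"
    using assms(4) by blast
  define N where "N = n - 1"
  have n: "n = Suc N" and "2 \<le> N"
    using assms(1) by (simp_all add: N_def)
  interpret R: strongly_rich_wnu N m \<rho> fs
    using assms(2,3) fs by unfold_locales (simp_all add: n)
  interpret L: wnu_loop N m "R.base ! N" R.last_entry R.wnu_last
    using R.wnu_loop_last_entry \<open>2 \<le> N\<close> .
  define \<phi> where "\<phi> i x = (if i < N then R.to_last i x else inv\<^bsub>L.add_group\<^esub> x)" for i x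
  have "bij (\<phi> i)" for i
    by (cases "i < N") (simp_all add: \<phi>_def[abs_def] R.bij_to_last L.bij_inv_add_group)
  moreover have "xs \<in> \<rho> \<longleftrightarrow>
      length xs = n \<and> finprod L.add_group (\<lambda>i. \<phi> i (xs ! i)) {..<n} = \<one>\<^bsub>L.add_group\<^esub>" for xs
    using L.finprod_inv_last_eq_one_iff[of "\<lambda>i. R.to_last i (xs ! i)" "\<lambda>i. xs ! i"]
    by (simp add: R.mem_iff_last_entry \<phi>_def n)
  ultimately show ?thesis
    using L.comm_group_add_group L.carrier_add_group by blast
qed

end
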